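(* Let $\mathcal{G}$ be a finite groupoid and $\mathcal{H}$ a connected wide subgroupoid of $\mathcal{G}$. Then $\mathbb{C}[\mathcal{G}/\mathcal{H}]\cong Y_\mathcal{H}$ as functors $\mathcal{G}\to\mathbf{Vect}_\mathbb{C}$.
   Context: A groupoid is a category in which every morphism is invertible; all groupoids are finite and nonempty; $gg'$ denotes composition. A subgroupoid is wide if it contains all objects, connected if any two of its objects are joined by one of its morphisms. For $x\in\mathcal{G}_0$ let $\mathrm{Mor}_\mathcal{G}(-,x):=\coprod_{y\in\mathcal{G}_0}\mathcal{G}(y,x)$ with equivalence relation $a\sim_{\mathcal{H},x}b\iff a^{-1}b\in\mathcal{H}_1$, class of $a$ written $a\mathcal{H}$. The $\mathcal{G}$-set $\mathcal{G}/\mathcal{H}$ sends $x$ to $\mathrm{Mor}_\mathcal{G}(-,x)/\sim_{\mathcal{H},x}$ and $g:x\to y$ to $a\mathcal{H}\mapsto ga\mathcal{H}$; $\mathbb{C}[\mathcal{G}/\mathcal{H}]$ is its composite with the free complex vector space functor. $Y_\mathcal{H}:\mathcal{G}\to\mathbf{Vect}_\mathbb{C}$ is given by $Y_\mathcal{H}(G):=\{f:\mathrm{Mor}_\mathcal{G}(-,G)\to\mathbb{C}\mid f(gh)=f(g)\text{ for all } g\in\mathrm{Mor}_\mathcal{G}(-,G),\ h\in\mathcal{H}_1,\ \mathrm{dom}\,g=\mathrm{cod}\,h\}$ (pointwise vector space structure) and, for $g:G\to G'$, $Y_\mathcal{H}(g)(f):=f(g^{-1}\,-)$. *)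

theory Defs
  imports Complex_Main
begin

text \<open>A (small) category whose morphisms are all invertible. Composition
  convention: comp g a is "g a", i.e. g after a, defined when dom g = cod a.\<close>

record ('o, 'm) groupoid =
  Obj   :: "'o set"
  Mor   :: "'m set"
  dom   :: "'m \<Rightarrow> 'o"
  cod   :: "'m \<Rightarrow> 'o"
  comp  :: "'m \<Rightarrow> 'm \<Rightarrow> 'm"
  ident :: "'o \<Rightarrow> 'm"

definition finite_groupoid :: "('o, 'm) groupoid \<Rightarrow> bool" where
  "finite_groupoid G \<longleftrightarrow>
     finite (Obj G) \<and> finite (Mor G) \<and> Obj G \<noteq> {} \<and>
     (\<forall>g\<in>Mor G. dom G g \<in> Obj G \<and> cod G g \<in> Obj G) \<and>
     (\<forall>g\<in>Mor G. \<forall>f\<in>Mor G. dom G g = cod G f \<longrightarrow>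
         comp G g f \<in> Mor G \<and> dom G (comp G g f) = dom G f \<and> cod G (comp G g f) = cod G g) \<and>
     (\<forall>h\<in>Mor G. \<forall>g\<in>Mor G. \<forall>f\<in>Mor G. dom G h = cod G g \<longrightarrow> dom G g = cod G f \<longrightarrow>
         comp G h (comp G g f) = comp G (comp G h g) f) \<and>
     (\<forall>x\<in>Obj G. ident G x \<in> Mor G \<and> dom G (ident G x) = x \<and> cod G (ident G x) = x) \<and>
     (\<forall>g\<in>Mor G. comp G g (ident G (dom G g)) = g \<and> comp G (ident G (cod G g)) g = g) \<and>
     (\<forall>g\<in>Mor G. \<exists>h\<in>Mor G. dom G h = cod G g \<and> cod G h = dom G g \<and>
         comp G h g = ident G (dom G g) \<and> comp G g h = ident G (cod G g))"

definition ginv :: "('o, 'm) groupoid \<Rightarrow> 'm \<Rightarrow> 'm" where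
  "ginv G g = (THE h. h \<in> Mor G \<and> dom G h = cod G g \<and> cod G h = dom G g \<and>
                  comp G h g = ident G (dom G g) \<and> comp G g h = ident G (cod G g))"

text \<open>A subgroupoid, given by its set of morphisms H1 (objects are all objects
  of G since it is wide), with the composition of G.\<close>

definition wide_subgroupoid :: "('o, 'm) groupoid \<Rightarrow> 'm set \<Rightarrow> bool" where
  "wide_subgroupoid G H1 \<longleftrightarrow>
     H1 \<subseteq> Mor G \<and>
     (\<forall>x\<in>Obj G. ident G x \<in> H1) \<and>
     (\<forall>g\<in>H1. \<forall>f\<in>H1. dom G g = cod G f \<longrightarrow> comp G g f \<in> H1) \<and>
     (\<forall>g\<in>H1. ginv G g \<in> H1)"

definition connected_sub :: "('o, 'm) groupoid \<Rightarrow> 'm set \<Rightarrow> bool" where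
  "connected_sub G H1 \<longleftrightarrow>
     (\<forall>x\<in>Obj G. \<forall>y\<in>Obj G. \<exists>h\<in>H1. dom G h = x \<and> cod G h = y)"

definition MorTo :: "('o, 'm) groupoid \<Rightarrow> 'o \<Rightarrow> 'm set" where
  "MorTo G x = {a \<in> Mor G. cod G a = x}"

definition cls :: "('o, 'm) groupoid \<Rightarrow> 'm set \<Rightarrow> 'o \<Rightarrow> 'm \<Rightarrow> 'm set" where
  "cls G H1 x a = {b \<in> MorTo G x. comp G (ginv G a) b \<in> H1}"

definition classes :: "('o, 'm) groupoid \<Rightarrow> 'm set \<Rightarrow> 'o \<Rightarrow> 'm set set" where
  "classes G H1 x = cls G H1 x ` MorTo G x"

definition qmap :: "('o, 'm) groupoid \<Rightarrow> 'm set \<Rightarrow> 'm \<Rightarrow> 'm set \<Rightarrow> 'm set" where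
  "qmap G H1 g C = cls G H1 (cod G g) (comp G g (SOME a. a \<in> C))"

text \<open>C[G/H]: the free complex vector space on (G/H)(x), realised as the
  complex-valued functions on classes vanishing outside (G/H)(x) (the sets
  are finite), and the linear extension of qmap.\<close>
definition CGH :: "('o, 'm) groupoid \<Rightarrow> 'm set \<Rightarrow> 'o \<Rightarrow> ('m set \<Rightarrow> complex) set" where
  "CGH G H1 x = {f. \<forall>C. C \<notin> classes G H1 x \<longrightarrow> f C = 0}"

definition CGH_map :: "('o, 'm) groupoid \<Rightarrow> 'm set \<Rightarrow> 'm \<Rightarrow> ('m set \<Rightarrow> complex) \<Rightarrow> ('m set \<Rightarrow> complex)" where
  "CGH_map G H1 g f = (\<lambda>D. \<Sum>C\<in>{C \<in> classes G H1 (dom G g). qmap G H1 g C = D}. f C)"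

text \<open>Y_H: functions on Mor_G(-,x) (extended by 0 outside) invariant under right
  multiplication by H.\<close>
definition YH :: "('o, 'm) groupoid \<Rightarrow> 'm set \<Rightarrow> 'o \<Rightarrow> ('m \<Rightarrow> complex) set" where
  "YH G H1 x = {f. (\<forall>a. a \<notin> MorTo G x \<longrightarrow> f a = 0) \<and>
      (\<forall>g\<in>MorTo G x. \<forall>h\<in>H1. dom G g = cod G h \<longrightarrow> f (comp G g h) = f g)}"

definition YH_map :: "('o, 'm) groupoid \<Rightarrow> 'm \<Rightarrow> ('m \<Rightarrow> complex) \<Rightarrow> ('m \<Rightarrow> complex)" where
  "YH_map G g f = (\<lambda>a. if a \<in> MorTo G (cod G g) then f (comp G (ginv G g) a) else 0)"

text \<open>Natural isomorphism between two functors G \<rightarrow> Vect_C, each given by its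
  object part (a family of complex vector spaces of functions with pointwise
  operations) and morphism part.\<close>
definition nat_iso ::
  "('o, 'm) groupoid \<Rightarrow> ('o \<Rightarrow> ('a \<Rightarrow> complex) set) \<Rightarrow> ('m \<Rightarrow> ('a \<Rightarrow> complex) \<Rightarrow> ('a \<Rightarrow> complex))
   \<Rightarrow> ('o \<Rightarrow> ('b \<Rightarrow> complex) set) \<Rightarrow> ('m \<Rightarrow> ('b \<Rightarrow> complex) \<Rightarrow> ('b \<Rightarrow> complex))
   \<Rightarrow> ('o \<Rightarrow> ('a \<Rightarrow> complex) \<Rightarrow> ('b \<Rightarrow> complex)) \<Rightarrow> bool" where
  "nat_iso G V A W B \<eta> \<longleftrightarrow>
     (\<forall>x\<in>Obj G.
        bij_betw (\<eta> x) (V x) (W x) \<and>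
        (\<forall>u\<in>V x. \<forall>v\<in>V x. \<eta> x (\<lambda>i. u i + v i) = (\<lambda>j. \<eta> x u j + \<eta> x v j)) \<and>
        (\<forall>c. \<forall>u\<in>V x. \<eta> x (\<lambda>i. c * u i) = (\<lambda>j. c * \<eta> x u j))) \<and>
     (\<forall>g\<in>Mor G. \<forall>v\<in>V (dom G g). \<eta> (cod G g) (A g v) = B g (\<eta> (dom G g) v))"

end

theory Submission
  imports Defs
begin

text \<open>The isomorphism sends \<open>u\<close> on \<open>(G/H)(x)\<close> to \<open>a \<mapsto> u(aH)\<close> on \<open>Mor(-,x)\<close>. A function on
  \<open>Mor(-,x)\<close> is right \<open>H\<close>-invariant exactly when it is constant on the cosets \<open>aH\<close>, so this
  is a bijection onto \<open>Y_H(x)\<close>. Naturality holds because left translation by \<open>g\<close> is injective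
  on cosets: the fibre of \<open>aH \<mapsto> gaH\<close> over \<open>aH\<close> is the single coset \<open>g\<inverse>aH\<close>, so the sum
  defining the linear extension has one term.\<close>

locale groupoid =
  fixes G :: "('o, 'm) groupoid"
  assumes dom_closed [simp]: "g \<in> Mor G \<Longrightarrow> dom G g \<in> Obj G"
    and cod_closed [simp]: "g \<in> Mor G \<Longrightarrow> cod G g \<in> Obj G"
    and comp_closed [simp]: "\<lbrakk>g \<in> Mor G; f \<in> Mor G; dom G g = cod G f\<rbrakk> \<Longrightarrow> comp G g f \<in> Mor G"
    and dom_comp [simp]: "\<lbrakk>g \<in> Mor G; f \<in> Mor G; dom G g = cod G f\<rbrakk> \<Longrightarrow> dom G (comp G g f) = dom G f"
    and cod_comp [simp]: "\<lbrakk>g \<in> Mor G; f \<in> Mor G; dom G g = cod G f\<rbrakk> \<Longrightarrow> cod G (comp G g f) = cod G g"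
    and comp_assoc: "\<lbrakk>h \<in> Mor G; g \<in> Mor G; f \<in> Mor G; dom G h = cod G g; dom G g = cod G f\<rbrakk> \<Longrightarrow>
      comp G h (comp G g f) = comp G (comp G h g) f"
    and ident_closed [simp]: "x \<in> Obj G \<Longrightarrow> ident G x \<in> Mor G"
    and dom_ident [simp]: "x \<in> Obj G \<Longrightarrow> dom G (ident G x) = x"
    and cod_ident [simp]: "x \<in> Obj G \<Longrightarrow> cod G (ident G x) = x"
    and comp_ident_right [simp]: "g \<in> Mor G \<Longrightarrow> comp G g (ident G (dom G g)) = g"
    and comp_ident_left [simp]: "g \<in> Mor G \<Longrightarrow> comp G (ident G (cod G g)) g = g"
    and inverse_exists: "g \<in> Mor G \<Longrightarrow> \<exists>h\<in>Mor G. dom G h = cod G g \<and> cod G h = dom G g \<and>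
      comp G h g = ident G (dom G g) \<and> comp G g h = ident G (cod G g)"

lemma finite_groupoid_imp_groupoid: "finite_groupoid G \<Longrightarrow> groupoid G"
  unfolding finite_groupoid_def by unfold_locales blast+

context groupoid
begin

definition is_inverse :: "'m \<Rightarrow> 'm \<Rightarrow> bool" where
  "is_inverse g h \<longleftrightarrow> h \<in> Mor G \<and> dom G h = cod G g \<and> cod G h = dom G g \<and>
     comp G h g = ident G (dom G g) \<and> comp G g h = ident G (cod G g)"

lemma is_inverse_unique:
  assumes "g \<in> Mor G" "is_inverse g h" "is_inverse g h'"
  shows "h = h'"
proof -
  have "h = comp G h (comp G g h')"
    using assms comp_ident_right[of h] unfolding is_inverse_def by simp
  also have "\<dots> = comp G (comp G h g) h'"
    using assms comp_assoc[of h g h'] unfolding is_inverse_def by simp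
  also have "\<dots> = h'"
    using assms comp_ident_left[of h'] unfolding is_inverse_def by simp
  finally show ?thesis .
qed

lemma is_inverse_ginv:
  assumes "g \<in> Mor G"
  shows "is_inverse g (ginv G g)"
proof -
  have "\<exists>!h. is_inverse g h"
    using inverse_exists[OF assms] is_inverse_unique[OF assms] unfolding is_inverse_def by blast
  then show ?thesis
    unfolding ginv_def is_inverse_def[symmetric] by (rule theI')
qed

lemma ginv_eqI: "\<lbrakk>g \<in> Mor G; is_inverse g h\<rbrakk> \<Longrightarrow> ginv G g = h"
  using is_inverse_unique is_inverse_ginv by blast

lemma ginv_closed [simp]: "g \<in> Mor G \<Longrightarrow> ginv G g \<in> Mor G"
  and dom_ginv [simp]: "g \<in> Mor G \<Longrightarrow> dom G (ginv G g) = cod G g"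
  and cod_ginv [simp]: "g \<in> Mor G \<Longrightarrow> cod G (ginv G g) = dom G g"
  and comp_ginv_left [simp]: "g \<in> Mor G \<Longrightarrow> comp G (ginv G g) g = ident G (dom G g)"
  and comp_ginv_right [simp]: "g \<in> Mor G \<Longrightarrow> comp G g (ginv G g) = ident G (cod G g)"
  using is_inverse_ginv unfolding is_inverse_def by blast+

lemma ginv_cancel_left [simp]:
  "\<lbrakk>g \<in> Mor G; h \<in> Mor G; dom G g = cod G h\<rbrakk> \<Longrightarrow> comp G (ginv G g) (comp G g h) = h"
  by (simp add: comp_assoc)

lemma ginv_cancel_right [simp]:
  "\<lbrakk>g \<in> Mor G; h \<in> Mor G; cod G g = cod G h\<rbrakk> \<Longrightarrow> comp G g (comp G (ginv G g) h) = h"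
  by (simp add: comp_assoc)

lemma ginv_ginv [simp]: "g \<in> Mor G \<Longrightarrow> ginv G (ginv G g) = g"
  by (rule ginv_eqI) (auto simp: is_inverse_def)

lemma ginv_comp:
  assumes "g \<in> Mor G" "f \<in> Mor G" "dom G g = cod G f"
  shows "ginv G (comp G g f) = comp G (ginv G f) (ginv G g)"
proof (rule ginv_eqI)
  have "comp G (comp G (ginv G f) (ginv G g)) (comp G g f) = ident G (dom G f)"
    using assms by (simp add: comp_assoc[symmetric])
  moreover have "comp G (comp G g f) (comp G (ginv G f) (ginv G g)) = ident G (cod G g)"
    using assms by (simp add: comp_assoc[symmetric])
  ultimately show "is_inverse (comp G g f) (comp G (ginv G f) (ginv G g))"
    using assms by (simp add: is_inverse_def)
qed (use assms in simp)

end

locale groupoid_wide_sub = groupoid G for G :: "('o, 'm) groupoid" +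
  fixes H :: "'m set"
  assumes wide_sub: "wide_subgroupoid G H"
begin

lemma sub_Mor: "h \<in> H \<Longrightarrow> h \<in> Mor G"
  and ident_in_sub: "x \<in> Obj G \<Longrightarrow> ident G x \<in> H"
  and comp_in_sub: "\<lbrakk>g \<in> H; f \<in> H; dom G g = cod G f\<rbrakk> \<Longrightarrow> comp G g f \<in> H"
  and ginv_in_sub: "g \<in> H \<Longrightarrow> ginv G g \<in> H"
  using wide_sub unfolding wide_subgroupoid_def by blast+

lemma MorTo_iff [simp]: "a \<in> MorTo G x \<longleftrightarrow> a \<in> Mor G \<and> cod G a = x"
  unfolding MorTo_def by simp

lemma cls_iff: "b \<in> cls G H x a \<longleftrightarrow> b \<in> MorTo G x \<and> comp G (ginv G a) b \<in> H"
  unfolding cls_def by simp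

lemma cls_self: "a \<in> MorTo G x \<Longrightarrow> a \<in> cls G H x a"
  by (simp add: cls_iff ident_in_sub)

lemma coset_rel_sym:
  assumes "a \<in> MorTo G x" "b \<in> MorTo G x" "comp G (ginv G a) b \<in> H"
  shows "comp G (ginv G b) a \<in> H"
proof -
  have "ginv G (comp G (ginv G a) b) = comp G (ginv G b) a"
    using assms by (simp add: ginv_comp)
  then show ?thesis
    using ginv_in_sub[OF assms(3)] by simp
qed

lemma coset_rel_trans:
  assumes "a \<in> MorTo G x" "b \<in> MorTo G x" "c \<in> MorTo G x"
    and "comp G (ginv G a) b \<in> H" "comp G (ginv G b) c \<in> H"
  shows "comp G (ginv G a) c \<in> H"
proof -
  have "comp G (comp G (ginv G a) b) (comp G (ginv G b) c) = comp G (ginv G a) c"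
    using assms by (simp add: comp_assoc[symmetric])
  with comp_in_sub[OF assms(4,5)] show ?thesis
    using assms by simp
qed

lemma cls_eq_iff:
  assumes "a \<in> MorTo G x" "b \<in> MorTo G x"
  shows "cls G H x a = cls G H x b \<longleftrightarrow> comp G (ginv G a) b \<in> H"
proof
  assume "cls G H x a = cls G H x b"
  then show "comp G (ginv G a) b \<in> H"
    using cls_self[OF assms(2)] cls_iff by blast
next
  assume "comp G (ginv G a) b \<in> H"
  with coset_rel_sym[OF assms] show "cls G H x a = cls G H x b"
    unfolding cls_def using coset_rel_trans[OF assms(1,2)] coset_rel_trans[OF assms(2,1)] by auto
qed

lemma cls_eq_of_mem: "\<lbrakk>a \<in> MorTo G x; b \<in> cls G H x a\<rbrakk> \<Longrightarrow> cls G H x b = cls G H x a"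
  using cls_eq_iff cls_iff coset_rel_sym by metis

lemma cls_comp_right:
  assumes "a \<in> MorTo G x" "h \<in> H" "dom G a = cod G h"
  shows "cls G H x (comp G a h) = cls G H x a"
  using assms sub_Mor[OF assms(2)] by (intro cls_eq_of_mem) (simp_all add: cls_iff)

lemma cls_comp_left_eq_iff:
  assumes "k \<in> Mor G" "a \<in> MorTo G (dom G k)" "b \<in> MorTo G (dom G k)"
  shows "cls G H (cod G k) (comp G k a) = cls G H (cod G k) (comp G k b) \<longleftrightarrow>
         cls G H (dom G k) a = cls G H (dom G k) b"
proof -
  have "comp G (ginv G (comp G k a)) (comp G k b) = comp G (ginv G a) b"
    using assms by (simp add: ginv_comp comp_assoc[symmetric])
  then show ?thesis
    using assms by (simp add: cls_eq_iff)
qed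

lemma qmap_cls:
  assumes "g \<in> Mor G" "a \<in> MorTo G (dom G g)"
  shows "qmap G H g (cls G H (dom G g) a) = cls G H (cod G g) (comp G g a)"
proof -
  define e where "e = (SOME e. e \<in> cls G H (dom G g) a)"
  have "e \<in> cls G H (dom G g) a"
    unfolding e_def using cls_self[OF assms(2)] by (rule someI)
  then have "e \<in> MorTo G (dom G g)" "cls G H (dom G g) e = cls G H (dom G g) a"
    using cls_eq_of_mem[OF assms(2)] cls_iff by auto
  then show ?thesis
    unfolding qmap_def e_def[symmetric] using cls_comp_left_eq_iff assms by blast
qed

lemma qmap_fiber:
  assumes "g \<in> Mor G" "a \<in> MorTo G (cod G g)"
  shows "{C \<in> classes G H (dom G g). qmap G H g C = cls G H (cod G g) a}
       = {cls G H (dom G g) (comp G (ginv G g) a)}"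
proof -
  let ?b = "comp G (ginv G g) a"
  have b: "?b \<in> MorTo G (dom G g)" and gb: "comp G g ?b = a"
    using assms by simp_all
  have "qmap G H g (cls G H (dom G g) c) = cls G H (cod G g) a \<longleftrightarrow>
        cls G H (dom G g) c = cls G H (dom G g) ?b" if "c \<in> MorTo G (dom G g)" for c
    using qmap_cls[OF assms(1) that] cls_comp_left_eq_iff[OF assms(1) that b] gb by simp
  with b show ?thesis
    unfolding classes_def by auto
qed

lemma YH_const_on_cls:
  assumes f: "f \<in> YH G H x" and a: "a \<in> MorTo G x" and b: "b \<in> cls G H x a"
  shows "f b = f a"
proof -
  let ?h = "comp G (ginv G a) b"
  have h: "?h \<in> H" and "b \<in> MorTo G x"
    using b cls_iff by auto
  with a have "comp G a ?h = b" and "dom G a = cod G ?h"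
    by simp_all
  moreover have "f (comp G a ?h) = f a"
    using f a h \<open>dom G a = cod G ?h\<close> unfolding YH_def by blast
  ultimately show ?thesis
    by simp
qed

definition lift_cls :: "'o \<Rightarrow> ('m set \<Rightarrow> complex) \<Rightarrow> 'm \<Rightarrow> complex" where
  "lift_cls x u = (\<lambda>a. if a \<in> MorTo G x then u (cls G H x a) else 0)"

lemma lift_cls_in_YH: "lift_cls x u \<in> YH G H x"
  unfolding YH_def lift_cls_def using sub_Mor by (auto simp: cls_comp_right)

lemma inj_on_lift_cls: "inj_on (lift_cls x) (CGH G H x)"
proof (rule inj_onI, rule ext)
  fix u v C
  assume u: "u \<in> CGH G H x" and v: "v \<in> CGH G H x" and eq: "lift_cls x u = lift_cls x v"
  show "u C = v C"
  proof (cases "C \<in> classes G H x")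
    case True
    then obtain a where "a \<in> MorTo G x" "C = cls G H x a"
      unfolding classes_def by blast
    then show ?thesis
      using fun_cong[OF eq, of a] unfolding lift_cls_def by simp
  next
    case False
    then show ?thesis
      using u v unfolding CGH_def by simp
  qed
qed

lemma lift_cls_surj:
  assumes f: "f \<in> YH G H x"
  shows "f \<in> lift_cls x ` CGH G H x"
proof
  let ?u = "\<lambda>C. if C \<in> classes G H x then f (SOME a. a \<in> C) else 0"
  show "?u \<in> CGH G H x"
    unfolding CGH_def by simp
  have "f a = ?u (cls G H x a)" if "a \<in> MorTo G x" for a
  proof -
    have "(SOME b. b \<in> cls G H x a) \<in> cls G H x a"
      using cls_self[OF that] by (rule someI)
    then show ?thesis
      using YH_const_on_cls[OF f that] that unfolding classes_def by auto
  qed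
  moreover have "f a = 0" if "a \<notin> MorTo G x" for a
    using f that unfolding YH_def by blast
  ultimately show "f = lift_cls x ?u"
    unfolding lift_cls_def by auto
qed

lemma bij_betw_lift_cls: "bij_betw (lift_cls x) (CGH G H x) (YH G H x)"
  unfolding bij_betw_def using inj_on_lift_cls lift_cls_in_YH lift_cls_surj by blast

lemma lift_cls_natural:
  assumes g: "g \<in> Mor G"
  shows "lift_cls (cod G g) (CGH_map G H g v) = YH_map G g (lift_cls (dom G g) v)"
proof
  fix a
  show "lift_cls (cod G g) (CGH_map G H g v) a = YH_map G g (lift_cls (dom G g) v) a"
  proof (cases "a \<in> MorTo G (cod G g)")
    case True
    then have "comp G (ginv G g) a \<in> MorTo G (dom G g)"
      using g by simp
    then show ?thesis
      using True unfolding lift_cls_def YH_map_def CGH_map_def qmap_fiber[OF g True] by simp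
  next
    case False
    then show ?thesis
      unfolding lift_cls_def YH_map_def by (simp only: if_False)
  qed
qed

lemma nat_iso_lift_cls: "nat_iso G (CGH G H) (CGH_map G H) (YH G H) (YH_map G) lift_cls"
  unfolding nat_iso_def using bij_betw_lift_cls lift_cls_natural
  by (auto simp: lift_cls_def fun_eq_iff)

end

theorem theorem5p3:
  fixes G :: "('o, 'm) groupoid" and H1 :: "'m set"
  assumes "finite_groupoid G"
    and "wide_subgroupoid G H1"
    and "connected_sub G H1"
  shows "\<exists>\<eta>. nat_iso G (CGH G H1) (CGH_map G H1) (YH G H1) (YH_map G) \<eta>"
proof -
  interpret groupoid_wide_sub G H1
    using assms(1,2) finite_groupoid_imp_groupoid
    by (simp add: groupoid_wide_sub_def groupoid_wide_sub_axioms_def)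
  show ?thesis
    using nat_iso_lift_cls by blast
qed

end
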